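(* Let $q\ge1$ and $x_0,\ldots,x_q\in\mathbb{R}$ with $x_q\ne x_0$. Assume that $|x_0-x_j|\le D$ for all $j=1,\ldots,q$ and $|x_0-x_j|\ge\Delta$ for all $j=1,\ldots,q-1$, where $D\ge\Delta>0$. Then for every $\tau\in(0,1]$, $$I_\tau(x_0,\ldots,x_q)\le\frac{2}{\tau^2}\left(\frac{D}{\Delta}\right)^{9/8+2\lambda^{-1}\log(1/\tau)},$$ where $\lambda$ is the positive root of the equation $e^{e^\lambda}(e^\lambda-1)=1$.
   Context: For real numbers $x_0,\ldots,x_q$ with $x_j\ne x_0$ for $j=1,\ldots,q$, and $\tau\in(0,1]$, define $$I_\tau(x_0,\ldots,x_q)=\min_{0=n_0<n_1<\cdots<n_m=q}\ \tau^{-m}\,\frac{\prod_{l=0}^{m-1}\prod_{j:\,n_l\le j<n_{l+1}}|x_{n_{l+1}}-x_j|}{\prod_{j=1}^q|x_0-x_j|},$$ the minimum being taken over all $m\ge1$ and all strictly increasing integer sequences $0=n_0<n_1<\cdots<n_m=q$. *)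

theory Defs
  imports Complex_Main
begin

text \<open>A chain \<open>0 = n_0 < n_1 < ... < n_m = q\<close> with \<open>m \<ge> 1\<close> is represented as the
  list \<open>[n_0, ..., n_m]\<close>; then \<open>m = length ns - 1\<close>.\<close>
definition admissible_chain :: "nat \<Rightarrow> nat list \<Rightarrow> bool" where
  "admissible_chain q ns \<longleftrightarrow> length ns \<ge> 2 \<and> sorted_wrt (<) ns \<and> hd ns = 0 \<and> last ns = q"

definition chain_value :: "real \<Rightarrow> (nat \<Rightarrow> real) \<Rightarrow> nat \<Rightarrow> nat list \<Rightarrow> real" where
  "chain_value \<tau> x q ns =
     (let m = length ns - 1 in
      (1 / \<tau>) ^ m *
      (\<Prod>l<m. \<Prod>j\<in>{ns ! l ..< ns ! (l + 1)}. \<bar>x (ns ! (l + 1)) - x j\<bar>) /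
      (\<Prod>j\<in>{1..q}. \<bar>x 0 - x j\<bar>))"

definition I_tau :: "real \<Rightarrow> (nat \<Rightarrow> real) \<Rightarrow> nat \<Rightarrow> real" where
  "I_tau \<tau> x q = Min (chain_value \<tau> x q ` {ns. admissible_chain q ns})"

definition lambda_root :: real where
  "lambda_root = (THE l. l > 0 \<and> exp (exp l) * (exp l - 1) = 1)"

end

theory Submission
  imports Defs
begin

text \<open>Write \<open>p\<^sub>j = x\<^sub>j - x\<^sub>0\<close> and build a chain backwards from \<open>q\<close>. Relative to the
  denominator of \<open>I\<^sub>\<tau>\<close>, an index \<open>j\<close> costs \<open>\<bar>p\<^sub>e - p\<^sub>j\<bar> / \<bar>p\<^sub>j\<bar>\<close> if it is skipped
  (\<open>e\<close> the current head) and \<open>\<bar>p\<^sub>e - p\<^sub>j\<bar> / (\<tau> \<bar>p\<^sub>e\<bar>)\<close> if it becomes the new head.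
  While all heads lie on one side of \<open>x\<^sub>0\<close>, a greedy rule works: skip \<open>j\<close> when
  \<open>\<bar>p\<^sub>e\<bar> \<le> e\<^sup>\<lambda> \<bar>p\<^sub>j\<bar>\<close> (the factor is then at most 1), otherwise switch and pay
  \<open>ln (1/\<tau>)\<close>, which is at most \<open>ln (1/\<tau>) / \<lambda>\<close> times the logarithmic drop of the head distance.
  Once an index on the other side occurs, two tails with heads on opposite sides are carried
  along and the average of their logarithmic costs, each weighted by the distance of the other
  head, is controlled. Skipping an index close to \<open>x\<^sub>0\<close> leaves this average unchanged, because
  \<open>\<bar>1 - r\<bar> \<le> e\<^sup>-\<^sup>r\<close> for \<open>0 \<le> r \<le> e\<^sup>\<lambda>\<close>; this is what determines \<open>\<lambda>\<close>. At an index far from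
  the head on its side, one of the two possible switches is cheap enough, by an explicit
  inequality between logarithms (Pade bounds and a polynomial certificate) that produces
  the exponent \<open>9/8\<close>.\<close>

section \<open>Chain products\<close>

fun chain_product :: "real \<Rightarrow> (nat \<Rightarrow> real) \<Rightarrow> nat list \<Rightarrow> real" where
  "chain_product \<tau> x (s # t # ns) =
     (1/\<tau>) * (\<Prod>j\<in>{s..<t}. \<bar>x t - x j\<bar>) * chain_product \<tau> x (t # ns)"
| "chain_product \<tau> x _ = 1"

lemma chain_product_eq_prod:
  "ns \<noteq> [] \<Longrightarrow> chain_product \<tau> x ns = (1/\<tau>) ^ (length ns - 1) *
     (\<Prod>l<length ns - 1. \<Prod>j\<in>{ns ! l ..< ns ! (l + 1)}. \<bar>x (ns ! (l + 1)) - x j\<bar>)"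
proof (induction \<tau> x ns rule: chain_product.induct)
  case (1 \<tau> x s t ns)
  have "length (s # t # ns) - 1 = Suc (length (t # ns) - 1)" by simp
  then show ?case using 1 by (simp only: prod.lessThan_Suc_shift) simp
qed auto

lemma chain_product_nonneg: "0 < \<tau> \<Longrightarrow> 0 \<le> chain_product \<tau> x ns"
  by (induction \<tau> x ns rule: chain_product.induct)
    (auto intro!: mult_nonneg_nonneg prod_nonneg divide_nonneg_pos)

lemma chain_value_eq_chain_product:
  "admissible_chain q ns \<Longrightarrow>
     chain_value \<tau> x q ns = chain_product \<tau> x ns / (\<Prod>j\<in>{1..q}. \<bar>x 0 - x j\<bar>)"
  by (cases ns) (auto simp: admissible_chain_def chain_value_def Let_def chain_product_eq_prod)

lemma sorted_wrt_less_le_last: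
  fixes ns :: "'a::linorder list"
  assumes "sorted_wrt (<) ns" "z \<in> set ns"
  shows "z \<le> last ns"
  using assms
proof (induction ns)
  case (Cons a ns)
  then show ?case
    by (cases "ns = []") (auto intro: less_imp_le dest: bspec[of _ _ "last ns"])
qed simp

lemma sorted_wrt_less_hd_le:
  fixes ns :: "'a::linorder list"
  shows "sorted_wrt (<) ns \<Longrightarrow> z \<in> set ns \<Longrightarrow> hd ns \<le> z"
  by (cases ns) auto

lemma finite_admissible_chains: "finite {ns. admissible_chain q ns}"
proof (rule finite_subset)
  show "{ns. admissible_chain q ns} \<subseteq> {ns. set ns \<subseteq> {0..q} \<and> length ns \<le> Suc q}"
  proof
    fix ns assume "ns \<in> {ns. admissible_chain q ns}"
    then have sorted: "sorted_wrt (<) ns" and last: "last ns = q"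
      unfolding admissible_chain_def by auto
    have set: "set ns \<subseteq> {0..q}" using sorted_wrt_less_le_last[OF sorted] last by auto
    have "length ns = card (set ns)"
      using sorted by (simp add: strict_sorted_iff distinct_card)
    also have "\<dots> \<le> card {0..q}" using set by (intro card_mono) auto
    finally show "ns \<in> {ns. set ns \<subseteq> {0..q} \<and> length ns \<le> Suc q}" using set by simp
  qed
  show "finite {ns. set ns \<subseteq> {0..q} \<and> length ns \<le> Suc q}"
    by (rule finite_lists_length_le) simp
qed

lemma I_tau_le_chain_value: "admissible_chain q ns \<Longrightarrow> I_tau \<tau> x q \<le> chain_value \<tau> x q ns"
  unfolding I_tau_def using finite_admissible_chains by (intro Min_le) auto

section \<open>The constant \<open>\<lambda>\<close>\<close>

lemma ex1_lambda_root: "\<exists>!l::real. 0 < l \<and> exp (exp l) * (exp l - 1) = 1"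
proof -
  define f where "f = (\<lambda>l::real. exp (exp l) * (exp l - 1))"
  have f_less: "f u < f v" if "0 < u" "u < v" for u v
    unfolding f_def using that by (intro mult_strict_mono) auto
  have "1 \<le> f 1"
  proof -
    have "1 \<le> exp (1::real) - 1" using exp_ge_add_one_self[of 1] by simp
    then have "1 * 1 \<le> exp (exp (1::real)) * (exp 1 - 1)" by (intro mult_mono) auto
    then show ?thesis unfolding f_def by simp
  qed
  moreover have "f 0 = 0" "continuous_on {0..1} f"
    unfolding f_def by (auto intro!: continuous_intros)
  ultimately obtain l where "0 \<le> l" "f l = 1" using IVT'[of f 0 1 1] by auto
  then have "0 < l \<and> f l = 1" using \<open>f 0 = 0\<close> by (cases "l = 0") auto
  moreover have "u = v" if "0 < u \<and> f u = 1" "0 < v \<and> f v = 1" for u v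
    using that f_less[of u v] f_less[of v u] by (cases u v rule: linorder_cases) auto
  ultimately show ?thesis unfolding f_def by blast
qed

lemma lambda_root_pos: "0 < lambda_root"
  and exp_lambda_root_eq: "(exp lambda_root - 1) * exp (exp lambda_root) = 1"
  using theI'[OF ex1_lambda_root] unfolding lambda_root_def[symmetric] by (auto simp: mult.commute)

lemma exp_lambda_root_gt: "6/5 < exp lambda_root"
proof (rule ccontr)
  assume "\<not> 6/5 < exp lambda_root"
  then have small: "exp lambda_root \<le> 6/5" by simp
  have "4/5 \<le> exp (-1/5::real)" using exp_ge_add_one_self[of "-1/5::real"] by simp
  then have "exp (1/5::real) \<le> 5/4" by (simp add: exp_minus field_simps)
  then have "exp (1/5::real) ^ 6 \<le> (5/4) ^ 6" by (rule power_mono) simp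
  then have "exp (6/5::real) \<le> (5/4) ^ 6" by (simp add: exp_of_nat_mult[symmetric])
  moreover have "(5/4::real) ^ 6 < 5" by (simp add: power_divide)
  ultimately have "exp (6/5::real) < 5" by linarith
  have "(exp lambda_root - 1) * exp (exp lambda_root) \<le> (1/5) * exp (6/5)"
    using small lambda_root_pos by (intro mult_mono) auto
  with \<open>exp (6/5) < 5\<close> show False using exp_lambda_root_eq by simp
qed

lemma abs_one_minus_le_exp_minus:
  fixes r :: real
  assumes "0 \<le> r" "r \<le> exp lambda_root"
  shows "\<bar>1 - r\<bar> \<le> exp (- r)"
proof (cases "r \<le> 1")
  case True
  then show ?thesis using exp_ge_add_one_self[of "-r"] by simp
next
  case False
  have "(r - 1) * exp r \<le> (exp lambda_root - 1) * exp (exp lambda_root)"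
    using False assms lambda_root_pos by (intro mult_mono) auto
  then have "(r - 1) * exp r \<le> 1" using exp_lambda_root_eq by simp
  then show ?thesis using False by (simp add: exp_minus field_simps)
qed

section \<open>Logarithmic inequalities\<close>

lemma binary_entropy_le_ln2:
  fixes A P :: real
  assumes "0 < A" "0 < P"
  shows "P * ln ((A + P) / P) + A * ln ((A + P) / A) \<le> (A + P) * ln 2"
proof -
  have bound: "w * ln ((A + P) / w) \<le> w * ln 2 + A/2 + P/2 - w" if "0 < w" for w
  proof -
    have "ln ((A + P) / (2 * w)) \<le> (A + P) / (2 * w) - 1"
      using that assms by (intro ln_le_minus_one) simp
    then have "w * ln ((A + P) / (2 * w)) \<le> w * ((A + P) / (2 * w) - 1)"
      using that by (intro mult_left_mono) auto
    moreover have "w * ((A + P) / (2 * w) - 1) = A/2 + P/2 - w"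
      using that by (simp add: field_simps)
    moreover have "w * ln ((A + P) / (2 * w)) = w * ln ((A + P) / w) - w * ln 2"
      using that assms by (simp add: ln_div ln_mult algebra_simps)
    ultimately show ?thesis by linarith
  qed
  show ?thesis using bound[of P] bound[of A] assms by (simp add: distrib_right)
qed

lemma ln_ge_pade:
  fixes y :: real
  assumes "1 \<le> y"
  shows "2 * (y - 1) / (y + 1) \<le> ln y"
proof -
  let ?g = "\<lambda>t::real. ln t - 2 * (t - 1) / (t + 1)"
  have "?g 1 \<le> ?g y"
  proof (rule DERIV_nonneg_imp_nondecreasing[OF assms])
    fix t :: real assume t: "1 \<le> t" "t \<le> y"
    have "(?g has_real_derivative (1/t - 4/(t + 1)^2)) (at t)"
      using t by (auto intro!: derivative_eq_intros simp: field_simps power2_eq_square)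
    moreover have "4 * t \<le> (t + 1)^2"
      using zero_le_power2[of "t - 1"] by (simp add: power2_eq_square algebra_simps)
    then have "0 \<le> 1/t - 4/(t + 1)^2" using t by (simp add: field_simps)
    ultimately show "\<exists>d. (?g has_real_derivative d) (at t) \<and> 0 \<le> d" by blast
  qed
  then show ?thesis by simp
qed

lemma ln_add_one_le_pade:
  fixes x :: real
  assumes "0 \<le> x"
  shows "ln (1 + x) \<le> x * (6 + x) / (6 + 4 * x)"
proof -
  let ?g = "\<lambda>t::real. t * (6 + t) / (6 + 4 * t) - ln (1 + t)"
  have "?g 0 \<le> ?g x"
  proof (rule DERIV_nonneg_imp_nondecreasing[OF assms])
    fix t :: real assume t: "0 \<le> t" "t \<le> x"
    have "(?g has_real_derivative ((36 + 12*t + 4*t^2) / (6 + 4*t)^2 - 1/(1 + t))) (at t)"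
      using t by (auto intro!: derivative_eq_intros simp: field_simps power2_eq_square)
    moreover have "(36 + 12*t + 4*t^2) * (1 + t) - (6 + 4*t)^2 = 4 * t^3"
      by (simp add: power2_eq_square power3_eq_cube algebra_simps)
    then have "0 \<le> (36 + 12*t + 4*t^2) / (6 + 4*t)^2 - 1/(1 + t)"
      using t by (simp add: field_simps)
    ultimately show "\<exists>d. (?g has_real_derivative d) (at t) \<and> 0 \<le> d" by blast
  qed
  then show ?thesis by simp
qed

lemma ln_one_minus_inverse_le:
  fixes r :: real
  assumes "1 < r"
  shows "ln (1 - 1/r) \<le> - 2 / (2 * r - 1)"
proof -
  have "2 * (r/(r - 1) - 1) / (r/(r - 1) + 1) \<le> ln (r/(r - 1))"
    using assms by (intro ln_ge_pade) simp
  moreover have "r - 1 \<noteq> 0" "2 * r - 1 \<noteq> 0" using assms by auto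
  then have "2 * (r/(r - 1) - 1) / (r/(r - 1) + 1) = 2 / (2 * r - 1)"
    by (simp add: divide_simps)
  moreover have "ln (1 - 1/r) = - ln (r/(r - 1))"
    using assms by (simp add: ln_div field_simps)
  ultimately show ?thesis by simp
qed

lemma ln_one_plus_inverse_le:
  fixes b :: real
  assumes "0 < b"
  shows "ln (1 + 1/b) \<le> (6*b + 1) / (b * (6*b + 4))"
proof -
  have "b \<noteq> 0" "6*b + 4 \<noteq> 0" using assms by auto
  then have "(1/b) * (6 + 1/b) / (6 + 4 * (1/b)) = (6*b + 1) / (b * (6*b + 4))"
    by (simp add: divide_simps)
  then show ?thesis using ln_add_one_le_pade[of "1/b"] assms by simp
qed

lemma switch_polynomial_nonneg:
  fixes r b :: real
  assumes r: "6/5 \<le> r" and b: "0 \<le> b"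
  shows "0 \<le> 9*(r-1)*(2*r-1)*(r+b)*(6*b+4)*(1+b)*(6+4*b) + 16*b*(6*b+4)*(1+b)*(6+4*b)*(r+1)
    - 8*(2*r-1)*(r-1)*(6*b+1)*(6+4*b)*(r+1) - 8*b*(6+b)*(2*r-1)*(r+b)*(6*b+4)*(r+1)"
proof -
  define a where "a = r - 6/5"
  have a: "0 \<le> a" and r_eq: "r = 6/5 + a" using r unfolding a_def by auto
  have "9*(r-1)*(2*r-1)*(r+b)*(6*b+4)*(1+b)*(6+4*b) + 16*b*(6*b+4)*(1+b)*(6+4*b)*(r+1)
    - 8*(2*r-1)*(r-1)*(6*b+1)*(6+4*b)*(r+1) - 8*b*(6+b)*(2*r-1)*(r+b)*(6*b+4)*(r+1)
    = 21068/25*(b - a/2)^2 + 220*b*(1 - 45/22*a*b)^2 + 60*a*(1 - 259/250*b^2)^2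
      + 130*a*(1 - 317/325*a*b)^2
      + (5376/125 + 1044/125*b + 45184/125*b^2 + 222036/125*b^3 + 18936/25*b^4 + 3338/25*a
         + 15908/25*a*b^3 + 1343757/3125*a*b^4 + 9973/25*a^2 + 212/5*a^2*b^2 + 17663/55*a^2*b^3
         + 336*a^2*b^4 + 336*a^3 + 344*a^3*b + 358022/1625*a^3*b^2 + 336*a^3*b^3)"
    unfolding r_eq by algebra
  also have "0 \<le> \<dots>" using a b by (intro add_nonneg_nonneg mult_nonneg_nonneg) auto
  finally show ?thesis .
qed

lemma switch_rational_bound:
  fixes r b :: real
  assumes r: "6/5 \<le> r" and b: "0 < b"
  shows "- 2*b / ((2*r-1)*(r+b)) + (r-1)*(6*b+1) / ((6*b+4)*(r+b)*(1+b))
     + b*(6+b) / ((6+4*b)*(1+b)) \<le> 9/8 * (r-1) / (r+1)"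
proof -
  define u v w y z t where "u = 2*r-1" and "v = r+b" and "w = 6*b+4" and "y = 1+b"
    and "z = 6+4*b" and "t = r+1"
  note defs = u_def v_def w_def y_def z_def t_def
  have pos: "0 < u" "0 < v" "0 < w" "0 < y" "0 < z" "0 < t" using r b unfolding defs by auto
  have "0 \<le> 9*(r-1)*u*v*w*y*z + 16*b*w*y*z*t - 8*u*(r-1)*(6*b+1)*z*t - 8*b*(6+b)*u*v*w*t"
    using switch_polynomial_nonneg[OF r less_imp_le[OF b]] unfolding defs .
  then have "0 \<le> v*y*(9*(r-1)*u*v*w*y*z + 16*b*w*y*z*t - 8*u*(r-1)*(6*b+1)*z*t
      - 8*b*(6+b)*u*v*w*t)"
    using pos by simp
  then have "-2*b/(u*v) + (r-1)*(6*b+1)/(w*v*y) + b*(6+b)/(z*y) \<le> 9/8*(r-1)/t"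
    using pos by (simp add: field_simps)
  then show ?thesis unfolding defs .
qed

lemma switch_log_bound:
  fixes r b :: real
  assumes r: "6/5 \<le> r" and b: "0 < b"
  shows "b / (r + b) * ln (1 - 1/r) + b / (r + b) * ((r - 1) / (1 + b)) * ln (1 + 1/b)
    + 1 / (1 + b) * ln (1 + b) \<le> 9/16 * ln r"
proof -
  have "b / (r + b) * ln (1 - 1/r) + b / (r + b) * ((r - 1) / (1 + b)) * ln (1 + 1/b)
      + 1 / (1 + b) * ln (1 + b)
    \<le> b / (r + b) * (- 2 / (2*r - 1))
      + b / (r + b) * ((r - 1) / (1 + b)) * ((6*b + 1) / (b * (6*b + 4)))
      + 1 / (1 + b) * (b * (6 + b) / (6 + 4 * b))"
    using r b
    by (intro add_mono mult_left_mono ln_one_minus_inverse_le ln_one_plus_inverse_le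
        ln_add_one_le_pade) auto
  also have "\<dots> = - 2*b / ((2*r-1)*(r+b)) + (r-1)*(6*b+1) / ((6*b+4)*(r+b)*(1+b))
      + b*(6+b) / ((6+4*b)*(1+b))"
    using r b by (simp add: divide_simps)
  also have "\<dots> \<le> 9/8 * (r - 1) / (r + 1)" by (rule switch_rational_bound[OF r b])
  also have "\<dots> = 9/16 * (2 * (r - 1) / (r + 1))" using r by (simp add: field_simps)
  also have "\<dots> \<le> 9/16 * ln r"
    using r by (intro mult_left_mono ln_ge_pade) auto
  finally show ?thesis .
qed

lemma switch_log_bound_scaled:
  fixes A B P :: real
  assumes P: "0 < P" and B: "0 < B" and A: "6/5 * P \<le> A"
  shows "B / (A + B) * ln ((A - P) / A) + B / (A + B) * ((A - P) / (P + B)) * ln ((B + P) / B)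
    + P / (P + B) * ln ((B + P) / P) \<le> 9/16 * ln (A / P)"
proof -
  have r: "6/5 \<le> A / P" and b: "0 < B / P" using A B P by (auto simp: field_simps)
  have "P \<noteq> 0" "A \<noteq> 0" "B \<noteq> 0" "A + B \<noteq> 0" "P + B \<noteq> 0" using P B A by auto
  then have "B / (A + B) = (B/P) / (A/P + B/P)" "P / (P + B) = 1 / (1 + B/P)"
    "(A - P) / A = 1 - 1/(A/P)" "(B + P) / B = 1 + 1/(B/P)" "(B + P) / P = 1 + B/P"
    by (simp_all add: field_simps)
  moreover have "(A - P) / (P + B) = (A/P - 1) / (1 + B/P)"
  proof -
    have "A/P - 1 = (A - P) / P" "1 + B/P = (P + B) / P" using P by (simp_all add: field_simps)
    then show ?thesis using P by simp
  qed
  ultimately show ?thesis using switch_log_bound[OF r b] by (simp only:)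
qed

lemma convex_combination_ge_min:
  fixes a u v :: real
  assumes "0 \<le> a" "a \<le> 1"
  shows "min u v \<le> a * u + (1 - a) * v"
proof -
  have "a * min u v + (1 - a) * min u v \<le> a * u + (1 - a) * v"
    using assms by (intro add_mono mult_left_mono) auto
  then show ?thesis by (simp add: algebra_simps)
qed

text \<open>Here \<open>A\<close> and \<open>B\<close> are the distances to \<open>x\<^sub>0\<close> of two heads on opposite sides, with
  logarithmic costs \<open>l1\<close> and \<open>l2\<close>, and \<open>P\<close> is the distance of a new index on the side of the
  first head. The two disjuncts are the weighted averages after skipping the new index in the
  second tail and switching to it from the first or from the second tail.\<close>
lemma cheaper_switch_exists:
  fixes A B P c l1 l2 :: real
  assumes P: "0 < P" and B: "0 < B" and A: "6/5 * P \<le> A" and c: "0 \<le> c"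
  defines "bound \<equiv> (B * l1 + A * l2) / (A + B) + c + 9/16 * ln (A / P)"
  shows "(B * (l1 + c + ln ((A - P) / A)) + P * (l2 + ln ((B + P) / P))) / (P + B) \<le> bound
    \<or> (B * (l2 + c + ln ((B + P) / B)) + P * (l2 + ln ((B + P) / P))) / (P + B) \<le> bound"
proof -
  define Q1 where "Q1 = (B * (l1 + c + ln ((A - P) / A)) + P * (l2 + ln ((B + P) / P))) / (P + B)"
  define Q2 where "Q2 = (B * (l2 + c + ln ((B + P) / B)) + P * (l2 + ln ((B + P) / P))) / (P + B)"
  define E where "E = B / (A + B) * ln ((A - P) / A)
      + B / (A + B) * ((A - P) / (P + B)) * ln ((B + P) / B) + P / (P + B) * ln ((B + P) / P)"
  define a where "a = (P + B) / (A + B)"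
  have a: "0 \<le> a" "a \<le> 1" unfolding a_def using P B A by auto
  have "a * Q1 + (1 - a) * Q2 = (B * l1 + A * l2) / (A + B) + c * (B / (P + B)) + E"
  proof -
    have "A + B \<noteq> 0" "P + B \<noteq> 0" using P B A by auto
    then show ?thesis unfolding a_def Q1_def Q2_def E_def by (simp add: divide_simps; algebra)
  qed
  moreover have "E \<le> 9/16 * ln (A / P)" unfolding E_def by (rule switch_log_bound_scaled[OF P B A])
  moreover have "c * (B / (P + B)) \<le> c" using P B c by (intro mult_left_le) auto
  ultimately have "min Q1 Q2 \<le> bound"
    using convex_combination_ge_min[OF a, of Q1 Q2] unfolding bound_def by linarith
  then show ?thesis unfolding Q1_def Q2_def by linarith
qed

section \<open>Building chains backwards\<close>

lemma abs_diff_same_sign: "0 < (u::real) * v \<Longrightarrow> \<bar>u - v\<bar> = \<bar>\<bar>u\<bar> - \<bar>v\<bar>\<bar>"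
  by (cases "0 \<le> u"; cases "0 \<le> v") (auto simp: zero_less_mult_iff)

lemma abs_diff_opposite_sign: "(u::real) * v < 0 \<Longrightarrow> \<bar>u - v\<bar> = \<bar>u\<bar> + \<bar>v\<bar>"
  by (cases "0 \<le> u"; cases "0 \<le> v") (auto simp: mult_less_0_iff)

lemma mult_neg_of_same_sign: "(u::real) * v < 0 \<Longrightarrow> 0 < u * w \<Longrightarrow> v * w < 0"
  by (auto simp: mult_less_0_iff zero_less_mult_iff)

locale chain_setting =
  fixes x :: "nat \<Rightarrow> real" and q :: nat and D \<Delta> \<tau> :: real
  assumes q_pos: "1 \<le> q" and x_q: "x q \<noteq> x 0"
    and dist_le_D: "\<And>j. 1 \<le> j \<Longrightarrow> j \<le> q \<Longrightarrow> \<bar>x 0 - x j\<bar> \<le> D"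
    and dist_ge_\<Delta>: "\<And>j. 1 \<le> j \<Longrightarrow> j \<le> q - 1 \<Longrightarrow> \<Delta> \<le> \<bar>x 0 - x j\<bar>"
    and \<Delta>_le_D: "\<Delta> \<le> D" and \<Delta>_pos: "0 < \<Delta>" and \<tau>_pos: "0 < \<tau>" and \<tau>_le_1: "\<tau> \<le> 1"
begin

definition p :: "nat \<Rightarrow> real" where "p j = x j - x 0"

definition c :: real where "c = ln (1 / \<tau>)"

lemma c_nonneg: "0 \<le> c"
  unfolding c_def using \<tau>_pos \<tau>_le_1 by simp

lemma exp_c: "exp c = 1 / \<tau>"
  unfolding c_def using \<tau>_pos by simp

lemma abs_x_diff_eq: "\<bar>x i - x j\<bar> = \<bar>p i - p j\<bar>"
  unfolding p_def by simp

lemma abs_p_bounds: "1 \<le> j \<Longrightarrow> j < q \<Longrightarrow> \<Delta> \<le> \<bar>p j\<bar> \<and> \<bar>p j\<bar> \<le> D"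
  using dist_ge_\<Delta>[of j] dist_le_D[of j] unfolding p_def by (auto simp: abs_minus_commute)

lemma abs_p_q: "0 < \<bar>p q\<bar>" "\<bar>p q\<bar> \<le> D"
  using x_q dist_le_D[of q] q_pos unfolding p_def by auto

lemma abs_p_pos: "1 \<le> j \<Longrightarrow> j \<le> q \<Longrightarrow> 0 < \<bar>p j\<bar>"
  using abs_p_bounds[of j] abs_p_q \<Delta>_pos by (cases "j = q") auto

definition tail_product :: "nat \<Rightarrow> nat list \<Rightarrow> real" where
  "tail_product i L = (\<Prod>j\<in>{i..<hd L}. \<bar>x (hd L) - x j\<bar>) * chain_product \<tau> x L"

definition tail_weight :: "nat \<Rightarrow> real" where
  "tail_weight i = (\<Prod>j\<in>{i..q}. \<bar>p j\<bar>)"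

text \<open>A tail \<open>L\<close> is a chain from its head to \<open>q\<close>; the factor \<open>\<bar>p (hd L)\<bar> / \<tau>\<close> is the cost of
  the eventual jump from \<open>0\<close> to the head, so that \<open>l\<close> bounds the logarithmic cost of the chain
  \<open>0 # L\<close> relative to the denominator of \<open>I_tau\<close>, restricted to the indices \<open>\<ge> i\<close>.\<close>
definition tail_bound :: "nat \<Rightarrow> nat list \<Rightarrow> real \<Rightarrow> bool" where
  "tail_bound i L l \<longleftrightarrow> L \<noteq> [] \<and> sorted_wrt (<) L \<and> last L = q \<and> i \<le> hd L \<and>
     \<bar>p (hd L)\<bar> / \<tau> * tail_product i L \<le> exp l * tail_weight i"

lemma tail_product_nonneg: "0 \<le> tail_product i L"
  unfolding tail_product_def using chain_product_nonneg[OF \<tau>_pos] by (simp add: prod_nonneg)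

lemma tail_bound_hd_bounds: "tail_bound i L l \<Longrightarrow> i \<le> hd L \<and> hd L \<le> q"
  unfolding tail_bound_def using sorted_wrt_less_le_last[of L "hd L"] by auto

lemma abs_p_hd_pos: "tail_bound (Suc s) L l \<Longrightarrow> 0 < \<bar>p (hd L)\<bar>"
  using tail_bound_hd_bounds abs_p_pos by fastforce

lemma tail_bound_init: "tail_bound q [q] c"
  unfolding tail_bound_def tail_product_def tail_weight_def using exp_c by simp

lemma tail_weight_Suc: "s \<le> q \<Longrightarrow> tail_weight s = \<bar>p s\<bar> * tail_weight (Suc s)"
  unfolding tail_weight_def by (simp add: prod.atLeast_Suc_atMost)

lemma tail_product_Suc:
  "s < hd L \<Longrightarrow> tail_product s L = \<bar>p (hd L) - p s\<bar> * tail_product (Suc s) L"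
  unfolding tail_product_def by (simp add: prod.atLeast_Suc_lessThan abs_x_diff_eq)

lemma tail_bound_skip:
  assumes tail: "tail_bound (Suc s) L l" and "s \<le> q"
    and cost: "\<bar>p (hd L) - p s\<bar> \<le> exp d * \<bar>p s\<bar>"
  shows "tail_bound s L (l + d)"
proof -
  have le: "\<bar>p (hd L)\<bar> / \<tau> * tail_product (Suc s) L \<le> exp l * tail_weight (Suc s)"
    and "Suc s \<le> hd L" using tail unfolding tail_bound_def by auto
  then have "\<bar>p (hd L)\<bar> / \<tau> * tail_product s L
      = \<bar>p (hd L) - p s\<bar> * (\<bar>p (hd L)\<bar> / \<tau> * tail_product (Suc s) L)"
    by (simp add: tail_product_Suc)
  also have "\<dots> \<le> (exp d * \<bar>p s\<bar>) * (exp l * tail_weight (Suc s))"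
    using tail_product_nonneg \<tau>_pos by (intro mult_mono[OF cost le]) auto
  also have "\<dots> = exp (l + d) * tail_weight s"
    using \<open>s \<le> q\<close> by (simp add: tail_weight_Suc exp_add)
  finally show ?thesis using tail unfolding tail_bound_def by auto
qed

lemma tail_bound_switch:
  assumes tail: "tail_bound (Suc s) L l" and "s \<le> q"
    and cost: "\<bar>p (hd L) - p s\<bar> / \<tau> \<le> exp d * \<bar>p (hd L)\<bar>"
  shows "tail_bound s (s # L) (l + d)"
proof -
  have le: "\<bar>p (hd L)\<bar> / \<tau> * tail_product (Suc s) L \<le> exp l * tail_weight (Suc s)"
    and "Suc s \<le> hd L" and "L \<noteq> []" using tail unfolding tail_bound_def by auto
  then obtain L' where L: "L = hd L # L'" by (cases L) auto
  have "tail_product s (s # L) = \<bar>p (hd L) - p s\<bar> / \<tau> * tail_product (Suc s) L"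
    using \<open>Suc s \<le> hd L\<close>
    by (subst L, subst L) (simp add: tail_product_def prod.atLeast_Suc_lessThan abs_x_diff_eq)
  then have "\<bar>p (hd (s # L))\<bar> / \<tau> * tail_product s (s # L)
      = \<bar>p s\<bar> * (\<bar>p (hd L) - p s\<bar> / \<tau>) * (tail_product (Suc s) L / \<tau>)"
    by simp
  also have "\<dots> \<le> \<bar>p s\<bar> * (exp d * \<bar>p (hd L)\<bar>) * (tail_product (Suc s) L / \<tau>)"
    using cost \<tau>_pos tail_product_nonneg by (intro mult_right_mono mult_left_mono) auto
  also have "\<dots> = \<bar>p s\<bar> * exp d * (\<bar>p (hd L)\<bar> / \<tau> * tail_product (Suc s) L)"
    by simp
  also have "\<dots> \<le> \<bar>p s\<bar> * exp d * (exp l * tail_weight (Suc s))"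
    using le by (intro mult_left_mono) auto
  also have "\<dots> = exp (l + d) * tail_weight s"
    using \<open>s \<le> q\<close> by (simp add: tail_weight_Suc exp_add)
  finally show ?thesis
    using tail sorted_wrt_less_hd_le[of L] \<open>Suc s \<le> hd L\<close>
    unfolding tail_bound_def by (auto intro: less_le_trans)
qed

lemma I_tau_le_exp_tail_bound:
  assumes tail: "tail_bound 1 L l"
  shows "I_tau \<tau> x q \<le> exp l"
proof -
  have le: "\<bar>p (hd L)\<bar> / \<tau> * tail_product 1 L \<le> exp l * tail_weight 1"
    and "1 \<le> hd L" and "L \<noteq> []" using tail unfolding tail_bound_def by auto
  then obtain L' where L: "L = hd L # L'" by (cases L) auto
  have chain: "admissible_chain q (0 # L)"
    using tail sorted_wrt_less_hd_le[of L] \<open>1 \<le> hd L\<close>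
    unfolding admissible_chain_def tail_bound_def by (auto intro: less_le_trans simp: Suc_le_eq)
  have "chain_product \<tau> x (0 # L) = \<bar>p (hd L)\<bar> / \<tau> * tail_product 1 L"
    using \<open>1 \<le> hd L\<close>
    by (subst L, subst L) (simp add: tail_product_def prod.atLeast_Suc_lessThan p_def)
  moreover have "(\<Prod>j\<in>{1..q}. \<bar>x 0 - x j\<bar>) = tail_weight 1"
    unfolding tail_weight_def p_def by (simp add: abs_minus_commute)
  ultimately have "chain_value \<tau> x q (0 # L) = \<bar>p (hd L)\<bar> / \<tau> * tail_product 1 L / tail_weight 1"
    by (simp add: chain_value_eq_chain_product[OF chain])
  also have "\<dots> \<le> exp l"
    using le abs_p_pos by (subst pos_divide_le_eq) (auto simp: tail_weight_def intro: prod_pos)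
  finally have "chain_value \<tau> x q (0 # L) \<le> exp l" .
  then show ?thesis using I_tau_le_chain_value[OF chain, of \<tau> x] by linarith
qed

text \<open>\<open>U\<close> is a reference scale for the head distance \<open>A\<close>; the alternative \<open>A = U\<close> admits
  the head \<open>q\<close>, which may be closer to \<open>x\<^sub>0\<close> than \<open>\<Delta>\<close>.\<close>
definition scale_bounded :: "real \<Rightarrow> real \<Rightarrow> bool" where
  "scale_bounded U A \<longleftrightarrow> 0 < A \<and> A \<le> U \<and> U \<le> D \<and> (A = U \<or> \<Delta> \<le> A)"

lemma ln_scale_bounded:
  assumes "scale_bounded U A"
  shows "0 \<le> ln (U / A)" "ln (U / A) \<le> ln (D / \<Delta>)"
proof -
  have A: "0 < A" "A \<le> U" "U \<le> D" "A = U \<or> \<Delta> \<le> A"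
    using assms unfolding scale_bounded_def by auto
  then show "0 \<le> ln (U / A)" by simp
  have "U / A \<le> D / \<Delta>"
    using A \<Delta>_pos \<Delta>_le_D by (cases "A = U") (auto simp: frac_le)
  then show "ln (U / A) \<le> ln (D / \<Delta>)" using A \<Delta>_pos by (subst ln_le_cancel_iff) auto
qed

lemma c_le_ln_far_ratio:
  assumes "exp lambda_root * P < A" "0 < P"
  shows "c \<le> c / lambda_root * ln (A / P)"
proof -
  have "exp lambda_root < A / P" using assms by (simp add: field_simps)
  moreover have "0 < A / P" using calculation exp_gt_zero[of lambda_root] by linarith
  ultimately have "lambda_root \<le> ln (A / P)" by (subst ln_ge_iff) auto
  then have "c * 1 \<le> c * (ln (A / P) / lambda_root)"
    using lambda_root_pos c_nonneg by (intro mult_left_mono) auto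
  then show ?thesis by simp
qed

definition one_sided :: "nat \<Rightarrow> bool" where
  "one_sided i \<longleftrightarrow> (\<exists>L l. tail_bound i L l \<and> scale_bounded \<bar>p q\<bar> \<bar>p (hd L)\<bar> \<and>
     l \<le> c + c / lambda_root * ln (\<bar>p q\<bar> / \<bar>p (hd L)\<bar>))"

lemma one_sidedI:
  "tail_bound i L l \<Longrightarrow> scale_bounded \<bar>p q\<bar> \<bar>p (hd L)\<bar> \<Longrightarrow>
     l \<le> c + c / lambda_root * ln (\<bar>p q\<bar> / \<bar>p (hd L)\<bar>) \<Longrightarrow> one_sided i"
  unfolding one_sided_def by blast

definition two_sided_budget :: "real \<Rightarrow> real \<Rightarrow> real \<Rightarrow> real \<Rightarrow> real" where
  "two_sided_budget U1 A1 U2 A2 =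
     2 * c + ln 2 + (c / lambda_root + 9/16) * (ln (U1 / A1) + ln (U2 / A2))"

lemma two_sided_budget_far_switch:
  assumes "scale_bounded U1 A1" "0 < P" "exp lambda_root * P < A1"
  shows "two_sided_budget U1 A1 U2 A2 + c + 9/16 * ln (A1 / P) \<le> two_sided_budget U1 P U2 A2"
proof -
  have "ln (U1 / P) = ln (U1 / A1) + ln (A1 / P)"
    using assms(1,2) unfolding scale_bounded_def by (simp add: ln_div)
  then have "two_sided_budget U1 P U2 A2
      = two_sided_budget U1 A1 U2 A2 + (c / lambda_root + 9/16) * ln (A1 / P)"
    unfolding two_sided_budget_def by (simp add: algebra_simps)
  with c_le_ln_far_ratio[OF assms(3,2)] show ?thesis by (simp add: algebra_simps)
qed

definition two_sided_pair ::
    "nat \<Rightarrow> nat list \<Rightarrow> real \<Rightarrow> real \<Rightarrow> nat list \<Rightarrow> real \<Rightarrow> real \<Rightarrow> bool" where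
  "two_sided_pair i L1 l1 U1 L2 l2 U2 \<longleftrightarrow>
     tail_bound i L1 l1 \<and> tail_bound i L2 l2 \<and> p (hd L1) * p (hd L2) < 0 \<and>
     scale_bounded U1 \<bar>p (hd L1)\<bar> \<and> scale_bounded U2 \<bar>p (hd L2)\<bar> \<and>
     (\<bar>p (hd L2)\<bar> * l1 + \<bar>p (hd L1)\<bar> * l2) / (\<bar>p (hd L1)\<bar> + \<bar>p (hd L2)\<bar>)
       \<le> two_sided_budget U1 \<bar>p (hd L1)\<bar> U2 \<bar>p (hd L2)\<bar>"

definition two_sided :: "nat \<Rightarrow> bool" where
  "two_sided i \<longleftrightarrow> (\<exists>L1 l1 U1 L2 l2 U2. two_sided_pair i L1 l1 U1 L2 l2 U2)"

lemma two_sided_pair_swap: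
  "two_sided_pair i L1 l1 U1 L2 l2 U2 \<Longrightarrow> two_sided_pair i L2 l2 U2 L1 l1 U1"
  unfolding two_sided_pair_def two_sided_budget_def by (simp add: mult.commute add.commute)

lemma one_sided_step_same_side:
  assumes tail: "tail_bound (Suc s) L l" and scale: "scale_bounded \<bar>p q\<bar> \<bar>p (hd L)\<bar>"
    and cost: "l \<le> c + c / lambda_root * ln (\<bar>p q\<bar> / \<bar>p (hd L)\<bar>)"
    and s: "1 \<le> s" "s < q" and side: "0 < p (hd L) * p s"
  shows "one_sided s"
proof -
  define A P where "A = \<bar>p (hd L)\<bar>" and "P = \<bar>p s\<bar>"
  have P: "\<Delta> \<le> P" "P \<le> D" using abs_p_bounds s unfolding P_def by auto
  have pos: "0 < P" "0 < A" using P \<Delta>_pos abs_p_hd_pos[OF tail] unfolding A_def by auto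
  have dist: "\<bar>p (hd L) - p s\<bar> = \<bar>A - P\<bar>"
    unfolding A_def P_def using side by (rule abs_diff_same_sign)
  show ?thesis
  proof (cases "A \<le> exp lambda_root * P")
    case True
    have "\<bar>1 - A / P\<bar> \<le> exp (- (A / P))"
      using True pos by (intro abs_one_minus_le_exp_minus) (auto simp: field_simps)
    also have "\<dots> \<le> 1" using pos by simp
    finally have "\<bar>A - P\<bar> \<le> exp 0 * P" using pos by (simp add: abs_le_iff field_simps)
    then have "tail_bound s L (l + 0)"
      using dist s unfolding P_def by (intro tail_bound_skip[OF tail]) auto
    then show ?thesis using scale cost by (auto intro: one_sidedI)
  next
    case False
    then have far: "exp lambda_root * P < A" by simp
    moreover have "P < exp lambda_root * P" using pos lambda_root_pos by simp
    ultimately have "P < A" by linarith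
    have "tail_bound s (s # L) (l + c)"
      using dist \<open>P < A\<close> s \<tau>_pos unfolding A_def P_def
      by (intro tail_bound_switch[OF tail]) (auto simp: exp_c divide_right_mono)
    moreover have "scale_bounded \<bar>p q\<bar> \<bar>p (hd (s # L))\<bar>"
      using scale \<open>P < A\<close> P pos unfolding scale_bounded_def A_def P_def by auto
    moreover have "l + c \<le> c + c / lambda_root * ln (\<bar>p q\<bar> / \<bar>p (hd (s # L))\<bar>)"
    proof -
      have "ln (\<bar>p q\<bar> / P) = ln (\<bar>p q\<bar> / A) + ln (A / P)"
        using pos abs_p_q by (simp add: ln_div)
      then show ?thesis
        using cost c_le_ln_far_ratio[OF far pos(1)] unfolding A_def P_def
        by (simp add: algebra_simps)
    qed
    ultimately show ?thesis by (rule one_sidedI)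
  qed
qed

lemma one_sided_step_opposite_side:
  assumes tail: "tail_bound (Suc s) L l" and scale: "scale_bounded \<bar>p q\<bar> \<bar>p (hd L)\<bar>"
    and cost: "l \<le> c + c / lambda_root * ln (\<bar>p q\<bar> / \<bar>p (hd L)\<bar>)"
    and s: "1 \<le> s" "s < q" and side: "p (hd L) * p s < 0"
  shows "two_sided s"
proof -
  define A P where "A = \<bar>p (hd L)\<bar>" and "P = \<bar>p s\<bar>"
  have P: "\<Delta> \<le> P" "P \<le> D" using abs_p_bounds s unfolding P_def by auto
  have pos: "0 < P" "0 < A" using P \<Delta>_pos abs_p_hd_pos[OF tail] unfolding A_def by auto
  have dist: "\<bar>p (hd L) - p s\<bar> = A + P"
    unfolding A_def P_def using side by (rule abs_diff_opposite_sign)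
  have skip: "tail_bound s L (l + ln ((A + P) / P))"
    using dist pos s unfolding P_def by (intro tail_bound_skip[OF tail]) auto
  have switch: "tail_bound s (s # L) (l + (c + ln ((A + P) / A)))"
    using dist pos s unfolding A_def
    by (intro tail_bound_switch[OF tail]) (auto simp: exp_add exp_c)
  have "(P * (l + ln ((A + P) / P)) + A * (l + (c + ln ((A + P) / A)))) / (A + P)
      = l + c * (A / (A + P)) + (P * ln ((A + P) / P) + A * ln ((A + P) / A)) / (A + P)"
  proof -
    have "A + P \<noteq> 0" using pos by simp
    then show ?thesis by (simp add: divide_simps) (simp add: algebra_simps)
  qed
  also have "\<dots> \<le> l + c + ln 2"
    using binary_entropy_le_ln2[OF pos(2,1)] pos c_nonneg
    by (intro add_mono mult_left_le) (auto simp: pos_divide_le_eq mult.commute)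
  also have "\<dots> \<le> two_sided_budget \<bar>p q\<bar> A D P"
  proof -
    have "0 \<le> ln (\<bar>p q\<bar> / A)" using ln_scale_bounded(1)[OF scale] unfolding A_def .
    moreover have "0 \<le> c / lambda_root * ln (D / P)"
      using c_nonneg lambda_root_pos P pos by (intro mult_nonneg_nonneg) auto
    moreover have "two_sided_budget \<bar>p q\<bar> A D P = 2 * c + ln 2 + c / lambda_root * ln (\<bar>p q\<bar> / A)
        + c / lambda_root * ln (D / P) + 9/16 * ln (\<bar>p q\<bar> / A) + 9/16 * ln (D / P)"
      unfolding two_sided_budget_def by (simp add: algebra_simps)
    moreover have "0 \<le> ln (D / P)" "0 \<le> ln (2::real)" using P pos by auto
    ultimately show ?thesis using cost c_nonneg unfolding A_def by linarith
  qed
  finally have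
    "two_sided_pair s L (l + ln ((A + P) / P)) \<bar>p q\<bar> (s # L) (l + (c + ln ((A + P) / A))) D"
    using skip switch side scale P pos unfolding two_sided_pair_def scale_bounded_def A_def P_def
    by simp
  then show ?thesis unfolding two_sided_def by blast
qed

lemma one_sided_step:
  assumes "one_sided (Suc s)" "1 \<le> s" "s < q"
  shows "one_sided s \<or> two_sided s"
proof -
  obtain L l where tail: "tail_bound (Suc s) L l" and scale: "scale_bounded \<bar>p q\<bar> \<bar>p (hd L)\<bar>"
    and cost: "l \<le> c + c / lambda_root * ln (\<bar>p q\<bar> / \<bar>p (hd L)\<bar>)"
    using assms(1) unfolding one_sided_def by blast
  have "p (hd L) * p s \<noteq> 0" using abs_p_hd_pos[OF tail] abs_p_pos[of s] assms by auto
  then consider "0 < p (hd L) * p s" | "p (hd L) * p s < 0" by linarith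
  then show ?thesis
    using one_sided_step_same_side[OF tail scale cost]
      one_sided_step_opposite_side[OF tail scale cost] assms
    by cases blast+
qed

lemma two_sided_step_near:
  assumes pair: "two_sided_pair (Suc s) L1 l1 U1 L2 l2 U2" and s: "1 \<le> s" "s < q"
    and side: "0 < p (hd L1) * p s" and near: "\<bar>p (hd L1)\<bar> \<le> exp lambda_root * \<bar>p s\<bar>"
  shows "two_sided s"
proof -
  define A1 A2 P where "A1 = \<bar>p (hd L1)\<bar>" and "A2 = \<bar>p (hd L2)\<bar>" and "P = \<bar>p s\<bar>"
  have tail1: "tail_bound (Suc s) L1 l1" and tail2: "tail_bound (Suc s) L2 l2"
    and sides: "p (hd L1) * p (hd L2) < 0"
    and scale1: "scale_bounded U1 A1" and scale2: "scale_bounded U2 A2"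
    and avg: "(A2 * l1 + A1 * l2) / (A1 + A2) \<le> two_sided_budget U1 A1 U2 A2"
    using pair unfolding two_sided_pair_def A1_def A2_def by auto
  have pos: "0 < P" "0 < A1" "0 < A2"
    using abs_p_pos[of s] s abs_p_hd_pos[OF tail1] abs_p_hd_pos[OF tail2]
    unfolding A1_def A2_def P_def by auto
  have side2: "p (hd L2) * p s < 0" by (rule mult_neg_of_same_sign[OF sides side])
  have skip1: "tail_bound s L1 (l1 + - (A1 / P))"
  proof (rule tail_bound_skip[OF tail1])
    have "\<bar>1 - A1 / P\<bar> \<le> exp (- (A1 / P))"
      using near pos unfolding A1_def P_def
      by (intro abs_one_minus_le_exp_minus) (auto simp: field_simps)
    then have "\<bar>A1 - P\<bar> \<le> exp (- (A1 / P)) * P"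
      using pos by (simp add: abs_le_iff field_simps)
    then show "\<bar>p (hd L1) - p s\<bar> \<le> exp (- (A1 / P)) * \<bar>p s\<bar>"
      using abs_diff_same_sign[OF side] unfolding A1_def P_def by simp
  qed (use s in auto)
  moreover have skip2: "tail_bound s L2 (l2 + A2 / P)"
  proof (rule tail_bound_skip[OF tail2])
    have "A2 + P = (1 + A2 / P) * P" using pos by (simp add: field_simps)
    also have "\<dots> \<le> exp (A2 / P) * P" using pos by (intro mult_right_mono exp_ge_add_one_self) auto
    finally show "\<bar>p (hd L2) - p s\<bar> \<le> exp (A2 / P) * \<bar>p s\<bar>"
      using abs_diff_opposite_sign[OF side2] unfolding A2_def P_def by simp
  qed (use s in auto)
  text \<open>With these weights the skip costs \<open>- A1 / P\<close> and \<open>A2 / P\<close> cancel.\<close>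
  have avg_eq: "(A2 * (l1 + - (A1 / P)) + A1 * (l2 + A2 / P)) / (A1 + A2)
      = (A2 * l1 + A1 * l2) / (A1 + A2)"
    by (simp add: algebra_simps)
  have "(A2 * (l1 + - (A1 / P)) + A1 * (l2 + A2 / P)) / (A1 + A2)
      \<le> two_sided_budget U1 A1 U2 A2"
    unfolding avg_eq by (rule avg)
  then have "two_sided_pair s L1 (l1 + - (A1 / P)) U1 L2 (l2 + A2 / P) U2"
    using skip1 skip2 sides scale1 scale2 unfolding two_sided_pair_def A1_def A2_def by blast
  then show ?thesis unfolding two_sided_def by blast
qed

lemma two_sided_step_far:
  assumes pair: "two_sided_pair (Suc s) L1 l1 U1 L2 l2 U2" and s: "1 \<le> s" "s < q"
    and side: "0 < p (hd L1) * p s" and far: "exp lambda_root * \<bar>p s\<bar> < \<bar>p (hd L1)\<bar>"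
  shows "two_sided s"
proof -
  define A1 A2 P where "A1 = \<bar>p (hd L1)\<bar>" and "A2 = \<bar>p (hd L2)\<bar>" and "P = \<bar>p s\<bar>"
  have tail1: "tail_bound (Suc s) L1 l1" and tail2: "tail_bound (Suc s) L2 l2"
    and sides: "p (hd L1) * p (hd L2) < 0"
    and scale1: "scale_bounded U1 A1" and scale2: "scale_bounded U2 A2"
    and avg: "(A2 * l1 + A1 * l2) / (A1 + A2) \<le> two_sided_budget U1 A1 U2 A2"
    using pair unfolding two_sided_pair_def A1_def A2_def by auto
  have P: "\<Delta> \<le> P" "P \<le> D" using abs_p_bounds s unfolding P_def by auto
  have pos: "0 < P" "0 < A2" using P \<Delta>_pos abs_p_hd_pos[OF tail2] unfolding A2_def by auto
  have side2: "p (hd L2) * p s < 0" by (rule mult_neg_of_same_sign[OF sides side])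
  have "6/5 * P < exp lambda_root * P" using exp_lambda_root_gt pos by simp
  then have ratio: "6/5 * P \<le> A1" "P < A1" using far pos unfolding A1_def P_def by linarith+
  have dist1: "\<bar>p (hd L1) - p s\<bar> = A1 - P"
    using abs_diff_same_sign[OF side] ratio unfolding A1_def P_def by simp
  have dist2: "\<bar>p (hd L2) - p s\<bar> = A2 + P"
    using abs_diff_opposite_sign[OF side2] unfolding A2_def P_def by simp
  define l2' where "l2' = l2 + ln ((A2 + P) / P)"
  have skip2: "tail_bound s L2 l2'"
    unfolding l2'_def using dist2 pos s unfolding P_def by (intro tail_bound_skip[OF tail2]) auto
  text \<open>Switching to \<open>s\<close> from either tail is admissible; averaged with suitable weights the two
    switches cost at most \<open>c + 9/16 ln (A1 / P)\<close>, so one of them does.\<close>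
  obtain L l where switch: "tail_bound s L l" and "hd L = s"
    and cheap: "(A2 * l + P * l2') / (P + A2)
      \<le> (A2 * l1 + A1 * l2) / (A1 + A2) + c + 9/16 * ln (A1 / P)"
  proof -
    have "tail_bound s (s # L1) (l1 + (c + ln ((A1 - P) / A1)))"
      using dist1 ratio pos s unfolding A1_def
      by (intro tail_bound_switch[OF tail1]) (auto simp: exp_add exp_c)
    moreover have "tail_bound s (s # L2) (l2 + (c + ln ((A2 + P) / A2)))"
      using dist2 pos s unfolding A2_def
      by (intro tail_bound_switch[OF tail2]) (auto simp: exp_add exp_c)
    ultimately show ?thesis
      using cheaper_switch_exists[OF pos(1,2) ratio(1) c_nonneg, of l1 l2] that
      unfolding l2'_def by (auto simp: add.assoc)
  qed
  have "(A2 * l + P * l2') / (P + A2) \<le> two_sided_budget U1 P U2 A2"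
    using cheap avg two_sided_budget_far_switch[OF scale1 pos(1), of U2 A2] far
    unfolding A1_def P_def by linarith
  moreover have "scale_bounded U1 P" using scale1 ratio P pos unfolding scale_bounded_def by auto
  ultimately have "two_sided_pair s L l U1 L2 l2' U2"
    using switch skip2 side2 scale2 \<open>hd L = s\<close>
    unfolding two_sided_pair_def A2_def P_def by (simp add: mult.commute)
  then show ?thesis unfolding two_sided_def by blast
qed

lemma two_sided_step:
  assumes "two_sided (Suc s)" "1 \<le> s" "s < q"
  shows "two_sided s"
proof -
  have step: "two_sided s" if pair: "two_sided_pair (Suc s) L1 l1 U1 L2 l2 U2"
    and side: "0 < p (hd L1) * p s" for L1 l1 U1 L2 l2 U2
    using two_sided_step_near[OF pair assms(2,3) side] two_sided_step_far[OF pair assms(2,3) side]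
    by fastforce
  obtain L1 l1 U1 L2 l2 U2 where pair: "two_sided_pair (Suc s) L1 l1 U1 L2 l2 U2"
    using assms(1) unfolding two_sided_def by blast
  then have sides: "p (hd L1) * p (hd L2) < 0" unfolding two_sided_pair_def by blast
  have "p s \<noteq> 0" using abs_p_pos[of s] assms by auto
  then have "0 < p (hd L1) * p s \<or> 0 < p (hd L2) * p s"
    using sides by (auto simp: mult_less_0_iff zero_less_mult_iff)
  then show ?thesis using step[OF pair] step[OF two_sided_pair_swap[OF pair]] by blast
qed

lemma one_sided_or_two_sided_1: "one_sided 1 \<or> two_sided 1"
  using q_pos
proof (induction rule: inc_induct)
  case base
  have "one_sided q"
    using tail_bound_init abs_p_q by (intro one_sidedI) (auto simp: scale_bounded_def)
  then show ?case ..
next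
  case (step s)
  then show ?case using one_sided_step[of s] two_sided_step[of s] by blast
qed

definition log_bound :: real where
  "log_bound = 2 * c + ln 2 + (9/8 + 2 * c / lambda_root) * ln (D / \<Delta>)"

lemma I_tau_bound_one_sided: "one_sided 1 \<Longrightarrow> I_tau \<tau> x q \<le> exp log_bound"
proof -
  assume "one_sided 1"
  then obtain L l where tail: "tail_bound 1 L l" and scale: "scale_bounded \<bar>p q\<bar> \<bar>p (hd L)\<bar>"
    and cost: "l \<le> c + c / lambda_root * ln (\<bar>p q\<bar> / \<bar>p (hd L)\<bar>)"
    unfolding one_sided_def by blast
  have "c / lambda_root * ln (\<bar>p q\<bar> / \<bar>p (hd L)\<bar>) \<le> c / lambda_root * ln (D / \<Delta>)"
    using ln_scale_bounded[OF scale] c_nonneg lambda_root_pos by (intro mult_left_mono) auto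
  moreover have "0 \<le> ln (D / \<Delta>)" "0 \<le> c / lambda_root * ln (D / \<Delta>)" "0 \<le> ln (2::real)"
    using \<Delta>_pos \<Delta>_le_D c_nonneg lambda_root_pos by auto
  moreover have "log_bound = 2 * c + ln 2 + 9/8 * ln (D / \<Delta>) + 2 * (c / lambda_root * ln (D / \<Delta>))"
    unfolding log_bound_def using lambda_root_pos by (simp add: field_simps)
  ultimately have "l \<le> log_bound" using cost c_nonneg by linarith
  then show ?thesis using I_tau_le_exp_tail_bound[OF tail] by (meson exp_le_cancel_iff order.trans)
qed

lemma I_tau_bound_two_sided: "two_sided 1 \<Longrightarrow> I_tau \<tau> x q \<le> exp log_bound"
proof -
  assume "two_sided 1"
  then obtain L1 l1 U1 L2 l2 U2 where pair: "two_sided_pair 1 L1 l1 U1 L2 l2 U2"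
    unfolding two_sided_def by blast
  define A1 A2 where "A1 = \<bar>p (hd L1)\<bar>" and "A2 = \<bar>p (hd L2)\<bar>"
  have tail1: "tail_bound 1 L1 l1" and tail2: "tail_bound 1 L2 l2"
    and scale1: "scale_bounded U1 A1" and scale2: "scale_bounded U2 A2"
    and avg: "(A2 * l1 + A1 * l2) / (A1 + A2) \<le> two_sided_budget U1 A1 U2 A2"
    using pair unfolding two_sided_pair_def A1_def A2_def by auto
  have pos: "0 < A1" "0 < A2" using scale1 scale2 unfolding scale_bounded_def by auto
  have "min l1 l2 \<le> A2 / (A1 + A2) * l1 + (1 - A2 / (A1 + A2)) * l2"
    using pos by (intro convex_combination_ge_min) auto
  also have "\<dots> = (A2 * l1 + A1 * l2) / (A1 + A2)"
  proof -
    have "A1 + A2 \<noteq> 0" using pos by simp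
    then show ?thesis by (simp add: divide_simps)
  qed
  also have "\<dots> \<le> two_sided_budget U1 A1 U2 A2" by (rule avg)
  also have "\<dots> \<le> log_bound"
  proof -
    have "(c / lambda_root + 9/16) * (ln (U1 / A1) + ln (U2 / A2))
        \<le> (c / lambda_root + 9/16) * (2 * ln (D / \<Delta>))"
      using ln_scale_bounded[OF scale1] ln_scale_bounded[OF scale2] c_nonneg lambda_root_pos
      by (intro mult_left_mono) auto
    moreover have "(c / lambda_root + 9/16) * (2 * ln (D / \<Delta>))
        = (9/8 + 2 * c / lambda_root) * ln (D / \<Delta>)"
      using lambda_root_pos by (simp add: field_simps)
    ultimately show ?thesis unfolding two_sided_budget_def log_bound_def by linarith
  qed
  finally show ?thesis
    using I_tau_le_exp_tail_bound[OF tail1] I_tau_le_exp_tail_bound[OF tail2]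
    by (cases "l1 \<le> l2") (auto simp: min_def intro: order.trans)
qed

lemma exp_log_bound:
  "exp log_bound = 2 / \<tau>\<^sup>2 * (D / \<Delta>) powr (9/8 + 2 / lambda_root * ln (1 / \<tau>))"
proof -
  have "log_bound = c + c + ln 2 + (9/8 + 2 / lambda_root * ln (1 / \<tau>)) * ln (D / \<Delta>)"
    unfolding log_bound_def c_def by (simp add: algebra_simps)
  then have "exp log_bound
      = exp c * exp c * exp (ln 2) * exp ((9/8 + 2 / lambda_root * ln (1 / \<tau>)) * ln (D / \<Delta>))"
    by (simp only: exp_add)
  then show ?thesis
    using \<tau>_pos \<Delta>_pos \<Delta>_le_D by (simp add: exp_c powr_def power2_eq_square)
qed

end

theorem lemma2:
  fixes x :: "nat \<Rightarrow> real" and q :: nat and D \<Delta> \<tau> :: real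
  assumes "q \<ge> 1"
    and "x q \<noteq> x 0"
    and "\<And>j. 1 \<le> j \<Longrightarrow> j \<le> q \<Longrightarrow> \<bar>x 0 - x j\<bar> \<le> D"
    and "\<And>j. 1 \<le> j \<Longrightarrow> j \<le> q - 1 \<Longrightarrow> \<bar>x 0 - x j\<bar> \<ge> \<Delta>"
    and "D \<ge> \<Delta>" and "\<Delta> > 0"
    and "0 < \<tau>" and "\<tau> \<le> 1"
  shows "I_tau \<tau> x q \<le> 2 / \<tau>\<^sup>2 * (D / \<Delta>) powr (9/8 + 2 / lambda_root * ln (1 / \<tau>))"
proof -
  interpret chain_setting x q D \<Delta> \<tau> using assms by unfold_locales auto
  have "I_tau \<tau> x q \<le> exp log_bound"
    using one_sided_or_two_sided_1 I_tau_bound_one_sided I_tau_bound_two_sided by blast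
  then show ?thesis by (simp only: exp_log_bound)
qed

end
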